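(* Let $\Psi$ be the endofunctor on digraphs defined as follows: for a digraph $H$, the vertices of $\Psi H$ are the arcs of $H$, and $((a,b),(c,d))$ is an arc of $\Psi H$ iff $(b,c)$ is an arc of $H$ (equivalently, $(a,b),(b,c),(c,d)$ is a directed walk of length 3 in $H$). Let $\mathcal T$ be a set of oriented trees that is a complete set of obstructions for a digraph $H$. Then the set $\Psi\text{-Sproink}(\mathcal T)=\{T/{\sim_b},\ T/{\sim_r} : T\in\mathcal T\}$ (each with loops removed) is a complete set of obstructions for $\Psi H$.
   Context: Digraphs are finite; homomorphisms are arc-preserving vertex maps. A set $\mathcal F$ is a complete set of obstructions for $H$ if for all digraphs $G$: $G\to H$ iff no $F\in\mathcal F$ admits a homomorphism to $G$. An oriented tree is a digraph whose underlying undirected graph is a tree; its algebraic height $h$ is the minimum number of arcs of a directed path $\vec P_h$ (vertices $0,\dots,h$, arcs $(i,i+1)$) to which it maps. For an oriented tree $T$ of algebraic height $h$ let $t:T\to\vec P_h$ be the unique such homomorphism (for $T$ connected with at least one arc). Blue arcs of $T$ are arcs $(x,y)$ with $t(x)$ even; red arcs are arcs $(x,y)$ with $t(x)$ odd. $x\sim_b y$ iff the (undirected) path in $T$ from $x$ to $y$ consists only of blue arcs; $x\sim_r y$ iff it consists only of red arcs. For an equivalence $\sim$, the quotient $T/{\sim}$ has the classes as vertices and $(X,Y)$ an arc iff some $x\in X,y\in Y$ have $(x,y)\in A(T)$; "with loops removed" means arcs $(X,X)$ are deleted. *)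

theory Defs
  imports Main
begin

text \<open>A digraph is a pair (vertex set, arc set); loops are allowed.\<close>
type_synonym 'a digraph = "'a set \<times> ('a \<times> 'a) set"

definition verts :: "'a digraph \<Rightarrow> 'a set" where "verts G = fst G"
definition arcs :: "'a digraph \<Rightarrow> ('a \<times> 'a) set" where "arcs G = snd G"

definition wf_digraph :: "'a digraph \<Rightarrow> bool" where
  "wf_digraph G \<longleftrightarrow> finite (verts G) \<and> arcs G \<subseteq> verts G \<times> verts G"

definition is_hom :: "'a digraph \<Rightarrow> 'b digraph \<Rightarrow> ('a \<Rightarrow> 'b) \<Rightarrow> bool" where
  "is_hom G H f \<longleftrightarrow> f ` verts G \<subseteq> verts H \<and>
     (\<forall>x y. (x, y) \<in> arcs G \<longrightarrow> (f x, f y) \<in> arcs H)"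

definition hom_to :: "'a digraph \<Rightarrow> 'b digraph \<Rightarrow> bool" where
  "hom_to G H \<longleftrightarrow> (\<exists>f. is_hom G H f)"

text \<open>Complete set of obstructions. The test digraphs G range over all finite
  digraphs whose vertices are natural numbers; every finite digraph is isomorphic
  to such a digraph.\<close>
definition complete_obs :: "'b digraph set \<Rightarrow> 'h digraph \<Rightarrow> bool" where
  "complete_obs F H \<longleftrightarrow> (\<forall>G :: nat digraph. wf_digraph G \<longrightarrow>
       (hom_to G H \<longleftrightarrow> \<not> (\<exists>T\<in>F. hom_to T G)))"

definition undir :: "('a \<times> 'a) set \<Rightarrow> ('a \<times> 'a) set" where
  "undir A = A \<union> A\<inverse>"

definition oriented_tree :: "'a digraph \<Rightarrow> bool" where
  "oriented_tree T \<longleftrightarrow> wf_digraph T \<and> verts T \<noteq> {} \<and>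
     (\<forall>x y. (x, y) \<in> arcs T \<longrightarrow> (y, x) \<notin> arcs T) \<and>
     (\<forall>x. (x, x) \<notin> arcs T) \<and>
     (\<forall>x\<in>verts T. \<forall>y\<in>verts T. (x, y) \<in> (undir (arcs T))\<^sup>*) \<and>
     card (arcs T) = card (verts T) - 1"

definition dipath :: "nat \<Rightarrow> nat digraph" where
  "dipath h = ({0..h}, {(i, Suc i) | i. i < h})"

definition alg_height :: "'a digraph \<Rightarrow> nat" where
  "alg_height T = (LEAST h. hom_to T (dipath h))"

text \<open>The (unique, for connected T with an arc) homomorphism t : T \<rightarrow> P_h.\<close>
definition height_map :: "'a digraph \<Rightarrow> 'a \<Rightarrow> nat" where
  "height_map T = (SOME f. is_hom T (dipath (alg_height T)) f)"

definition blue_arcs :: "'a digraph \<Rightarrow> ('a \<times> 'a) set" where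
  "blue_arcs T = {(x, y). (x, y) \<in> arcs T \<and> even (height_map T x)}"

definition red_arcs :: "'a digraph \<Rightarrow> ('a \<times> 'a) set" where
  "red_arcs T = {(x, y). (x, y) \<in> arcs T \<and> odd (height_map T x)}"

text \<open>x ~ y iff the (unique, T being a tree) undirected path from x to y in T
  uses only arcs from the given set S, i.e. x, y are connected in the undirected
  subgraph spanned by S.\<close>
definition path_equiv :: "'a digraph \<Rightarrow> ('a \<times> 'a) set \<Rightarrow> ('a \<times> 'a) set" where
  "path_equiv T S = {(x, y). x \<in> verts T \<and> y \<in> verts T \<and> (x, y) \<in> (undir S)\<^sup>*}"

definition sim_b :: "'a digraph \<Rightarrow> ('a \<times> 'a) set" where
  "sim_b T = path_equiv T (blue_arcs T)"

definition sim_r :: "'a digraph \<Rightarrow> ('a \<times> 'a) set" where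
  "sim_r T = path_equiv T (red_arcs T)"

definition quot_noloops :: "'a digraph \<Rightarrow> ('a \<times> 'a) set \<Rightarrow> 'a set digraph" where
  "quot_noloops T R = (verts T // R,
     {(X, Y). X \<in> verts T // R \<and> Y \<in> verts T // R \<and> X \<noteq> Y \<and>
              (\<exists>x\<in>X. \<exists>y\<in>Y. (x, y) \<in> arcs T)})"

definition Psi :: "'a digraph \<Rightarrow> ('a \<times> 'a) digraph" where
  "Psi H = (arcs H, {((a, b), (c, d)). (a, b) \<in> arcs H \<and> (c, d) \<in> arcs H \<and> (b, c) \<in> arcs H})"

definition Psi_sproink :: "'a digraph set \<Rightarrow> 'a set digraph set" where
  "Psi_sproink \<T> = (\<lambda>T. quot_noloops T (sim_b T)) ` \<T> \<union> (\<lambda>T. quot_noloops T (sim_r T)) ` \<T>"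

end

theory Submission
  imports Defs
begin

(* The functor Psi has a left adjoint Lambda on digraphs: Lambda G replaces
   every vertex v of G by an arc 2v -> 2v+1 and every arc (u,v) of G by an arc 2u+1 -> 2v,
   and G -> Psi H holds iff Lambda G -> H.  Since the obstruction sets are tested on
   digraphs over nat, Lambda is defined on nat-digraphs and stays inside them.
   Hence G -> Psi H iff no tree T of the obstruction set maps to Lambda G, and the
   theorem reduces to the following fact about a single oriented tree T:
       T -> Lambda G   iff   T/~b -> G  or  T/~r -> G.
   Along an arc of T the height t rises by one, and along an arc of Lambda G a homomorphism
   either moves inside a "vertex arc" (2v -> 2v+1) or along an "arc of G" (odd -> even).
   Which of the two happens is decided by the parity of t x + phi x, which is constant on the
   connected tree; so the arcs of one colour are exactly those mapped to vertex arcs, and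
   phi factors through the quotient by that colour.  Conversely a map on a quotient lifts
   to T because each colour class lies within two consecutive levels of t. *)


section \<open>Undirected walks\<close>

lemma sym_undir_rtrancl: "sym ((undir S)\<^sup>*)"
  unfolding undir_def by (intro sym_rtrancl sym_Un_converse)

lemma undir_walk_invariant:
  assumes "(x, y) \<in> (undir S)\<^sup>*" and "\<And>a b. (a, b) \<in> S \<Longrightarrow> F a = F b"
  shows "F x = F y"
  using assms(1)
proof induction
  case (step y z)
  then have "(y, z) \<in> S \<or> (z, y) \<in> S" by (auto simp: undir_def)
  then have "F y = F z" using assms(2) by metis
  with step.IH show ?case by simp
qed simp

lemma equiv_path_equiv: "equiv (verts T) (path_equiv T S)"
proof (rule equivI)
  show "path_equiv T S \<subseteq> verts T \<times> verts T" "refl_on (verts T) (path_equiv T S)"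
    unfolding path_equiv_def refl_on_def by auto
  show "sym (path_equiv T S)"
    using sym_undir_rtrancl[of S] unfolding path_equiv_def sym_def by blast
  show "trans (path_equiv T S)"
    unfolding trans_def path_equiv_def by (auto intro: rtrancl_trans)
qed

lemma path_equiv_arc_class:
  assumes "(x, y) \<in> S" "x \<in> verts T" "y \<in> verts T"
  shows "path_equiv T S `` {x} = path_equiv T S `` {y}"
proof -
  have "(x, y) \<in> path_equiv T S"
    using assms unfolding path_equiv_def undir_def by auto
  then show ?thesis by (rule equiv_class_eq[OF equiv_path_equiv])
qed


section \<open>Trees are balanced\<close>

lemma degree_sum:
  assumes "finite V" "A \<subseteq> V \<times> V" "\<forall>x. (x, x) \<notin> A"
  shows "(\<Sum>v\<in>V. card {a\<in>A. fst a = v \<or> snd a = v}) = 2 * card A"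
proof -
  have finA: "finite A" using assms(1,2) finite_subset by blast
  have split: "card {a\<in>A. fst a = v \<or> snd a = v} =
      card {a\<in>A. fst a = v} + card {a\<in>A. snd a = v}" for v
  proof -
    have "{a\<in>A. fst a = v \<or> snd a = v} = {a\<in>A. fst a = v} \<union> {a\<in>A. snd a = v}" by auto
    moreover have "{a\<in>A. fst a = v} \<inter> {a\<in>A. snd a = v} = {}" using assms(3) by auto
    ultimately show ?thesis using finA by (simp add: card_Un_disjoint)
  qed
  have count: "(\<Sum>v\<in>V. card {a\<in>A. e a = v}) = card A" if "e ` A \<subseteq> V" for e :: "'a \<times> 'a \<Rightarrow> 'a"
  proof -
    have "card (\<Union>v\<in>V. {a\<in>A. e a = v}) = (\<Sum>v\<in>V. card {a\<in>A. e a = v})"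
      by (rule card_UN_disjoint) (use assms(1) finA in auto)
    moreover have "(\<Union>v\<in>V. {a\<in>A. e a = v}) = A" using that by auto
    ultimately show ?thesis by simp
  qed
  have "fst ` A \<subseteq> V" "snd ` A \<subseteq> V" using assms(2) by auto
  then show ?thesis using count[of fst] count[of snd] by (simp add: split sum.distrib)
qed

lemma tree_has_leaf:
  assumes fin: "finite V" and sub: "A \<subseteq> V \<times> V" and loopless: "\<forall>x. (x, x) \<notin> A"
    and conn: "\<forall>x\<in>V. \<forall>y\<in>V. (x, y) \<in> (undir A)\<^sup>*"
    and card: "card A = card V - 1" and two: "card V \<ge> 2"
  obtains v a where "v \<in> V" "a \<in> A" "fst a = v \<or> snd a = v"
    "\<forall>b\<in>A. fst b = v \<or> snd b = v \<longrightarrow> b = a"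
proof -
  define D where "D v = {b\<in>A. fst b = v \<or> snd b = v}" for v
  have "\<exists>v\<in>V. card (D v) \<le> 1"
  proof (rule ccontr)
    assume "\<not> ?thesis"
    then have "(\<Sum>v\<in>V. (2::nat)) \<le> (\<Sum>v\<in>V. card (D v))" by (intro sum_mono) auto
    then show False using degree_sum[OF fin sub loopless] card two by (simp add: D_def)
  qed
  then obtain v where v: "v \<in> V" "card (D v) \<le> 1" by blast
  have "V \<noteq> {v}" using two by auto
  then obtain u where u: "u \<in> V" "u \<noteq> v" using v(1) by blast
  then have "(v, u) \<in> (undir A)\<^sup>*" using conn v(1) by blast
  then obtain w where "(v, w) \<in> undir A" using u(2) by (metis converse_rtranclE)
  then have "D v \<noteq> {}" unfolding D_def undir_def by force
  moreover have "finite (D v)" using fin sub finite_subset unfolding D_def by fastforce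
  ultimately have "card (D v) = 1" using v(2) by (simp add: le_Suc_eq)
  then obtain a where Da: "D v = {a}" by (rule card_1_singletonE)
  then have "a \<in> D v" "\<And>b. b \<in> D v \<Longrightarrow> b = a" by auto
  then show thesis using that v(1) unfolding D_def by blast
qed

lemma connected_delete_leaf:
  assumes conn: "\<forall>x\<in>V. \<forall>y\<in>V. (x, y) \<in> (undir A)\<^sup>*"
    and only_a: "\<And>b. b \<in> A \<Longrightarrow> fst b = v \<or> snd b = v \<Longrightarrow> b = a"
    and a: "a = (v, w) \<or> a = (w, v)"
  shows "\<forall>x\<in>V - {v}. \<forall>y\<in>V - {v}. (x, y) \<in> (undir (A - {a}))\<^sup>*"
proof -
  have at_leaf: "z = w" if "(z, v) \<in> undir A \<or> (v, z) \<in> undir A" for z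
    using that a only_a[of "(z, v)"] only_a[of "(v, z)"] unfolding undir_def by auto
  have avoid: "(z, y) \<in> undir (A - {a})" if "(z, y) \<in> undir A" "z \<noteq> v" "y \<noteq> v" for z y
    using that a unfolding undir_def by auto
  have walk: "(y \<noteq> v \<longrightarrow> (x, y) \<in> (undir (A - {a}))\<^sup>*) \<and> (y = v \<longrightarrow> (x, w) \<in> (undir (A - {a}))\<^sup>*)"
    if "(x, y) \<in> (undir A)\<^sup>*" "x \<noteq> v" for x y
    using that(1)
  proof induction
    case base then show ?case using that(2) by auto
  next
    case (step z y)
    show ?case
    proof (cases "z = v")
      case True
      then have "y = w" using step.hyps(2) at_leaf by blast
      then show ?thesis using step.IH True by blast
    next
      case False
      then have xz: "(x, z) \<in> (undir (A - {a}))\<^sup>*" using step.IH by simp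
      show ?thesis
      proof (cases "y = v")
        case True
        then show ?thesis using at_leaf step.hyps(2) xz by blast
      next
        case False
        then show ?thesis using avoid[OF step.hyps(2) \<open>z \<noteq> v\<close>] xz by (simp add: rtrancl_into_rtrancl)
      qed
    qed
  qed
  then show ?thesis using conn by blast
qed

lemma tree_potential:
  assumes "finite V" "A \<subseteq> V \<times> V" "\<forall>x. (x, x) \<notin> A"
    "\<forall>x\<in>V. \<forall>y\<in>V. (x, y) \<in> (undir A)\<^sup>*" "card A = card V - 1"
  shows "\<exists>f::'a \<Rightarrow> int. \<forall>x y. (x, y) \<in> A \<longrightarrow> f y = f x + 1"
  using assms
proof (induction "card V" arbitrary: V A rule: less_induct)
  case less
  have finA: "finite A" using less.prems(1,2) finite_subset by blast
  show ?case
  proof (cases "card V \<ge> 2")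
    case False
    then have "A = {}" using less.prems(5) finA by auto
    then show ?thesis by auto
  next
    case True
    obtain v a where v: "v \<in> V" and aA: "a \<in> A" and a_at_v: "fst a = v \<or> snd a = v"
      and leaf: "\<forall>b\<in>A. fst b = v \<or> snd b = v \<longrightarrow> b = a"
      using tree_has_leaf[OF less.prems True] .
    have only_a: "b = a" if "b \<in> A" "fst b = v \<or> snd b = v" for b
      using leaf that by blast
    from a_at_v obtain w where a: "a = (v, w) \<or> a = (w, v)" by (cases a) auto
    have w_ne: "w \<noteq> v" using a aA less.prems(3) by auto
    define V' where "V' = V - {v}"
    define A' where "A' = A - {a}"
    have card_V': "card V' = card V - 1" unfolding V'_def using v less.prems(1) by simp
    have "card V' < card V" using card_V' True by simp
    moreover have "finite V'" unfolding V'_def using less.prems(1) by simp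
    moreover have "A' \<subseteq> V' \<times> V'"
      using less.prems(2) only_a unfolding A'_def V'_def by fastforce
    moreover have "\<forall>x. (x, x) \<notin> A'" unfolding A'_def using less.prems(3) by simp
    moreover have "\<forall>x\<in>V'. \<forall>y\<in>V'. (x, y) \<in> (undir A')\<^sup>*"
      unfolding V'_def A'_def by (rule connected_delete_leaf[OF less.prems(4) only_a a])
    moreover have "card A' = card V' - 1"
      unfolding A'_def using aA finA card_V' less.prems(5) by simp
    ultimately have "\<exists>f::'a \<Rightarrow> int. \<forall>x y. (x, y) \<in> A' \<longrightarrow> f y = f x + 1"
      by (rule less.hyps)
    then obtain f :: "'a \<Rightarrow> int" where f: "\<forall>x y. (x, y) \<in> A' \<longrightarrow> f y = f x + 1" ..
    define f' where "f' = f(v := if a = (v, w) then f w - 1 else f w + 1)"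
    have "f' y = f' x + 1" if "(x, y) \<in> A" for x y
    proof (cases "(x, y) = a")
      case True
      then show ?thesis using a w_ne unfolding f'_def by auto
    next
      case False
      then have "(x, y) \<in> A'" "x \<noteq> v" "y \<noteq> v" using that only_a unfolding A'_def by auto
      then show ?thesis using f unfolding f'_def by auto
    qed
    then show ?thesis by blast
  qed
qed

lemma oriented_tree_hom_dipath:
  assumes "oriented_tree T" shows "\<exists>h. hom_to T (dipath h)"
proof -
  have T: "finite (verts T)" "arcs T \<subseteq> verts T \<times> verts T" "\<forall>x. (x, x) \<notin> arcs T"
     "\<forall>x\<in>verts T. \<forall>y\<in>verts T. (x, y) \<in> (undir (arcs T))\<^sup>*"
     "card (arcs T) = card (verts T) - 1"
    using assms unfolding oriented_tree_def wf_digraph_def by auto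
  obtain f :: "'a \<Rightarrow> int" where f: "\<forall>x y. (x, y) \<in> arcs T \<longrightarrow> f y = f x + 1"
    using tree_potential[OF T] by blast
  define g where "g x = nat (f x - Min (f ` verts T))" for x
  define h where "h = Max (g ` verts T)"
  have "is_hom T (dipath h) g"
    unfolding is_hom_def
  proof (intro conjI allI impI)
    show "g ` verts T \<subseteq> verts (dipath h)"
      using T(1) by (auto simp: h_def dipath_def verts_def)
  next
    fix x y assume xy: "(x, y) \<in> arcs T"
    then have "x \<in> verts T" "y \<in> verts T" using T(2) by auto
    then have "Min (f ` verts T) \<le> f x" "g y \<le> h" using T(1) by (auto simp: h_def)
    moreover have "f y = f x + 1" using f xy by auto
    ultimately have "g y = Suc (g x)" "g x < h" unfolding g_def by auto
    then show "(g x, g y) \<in> arcs (dipath h)" by (auto simp: dipath_def arcs_def)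
  qed
  then show ?thesis unfolding hom_to_def by blast
qed

lemma height_map_arc:
  assumes "oriented_tree T" "(x, y) \<in> arcs T"
  shows "height_map T y = Suc (height_map T x)"
proof -
  have "hom_to T (dipath (alg_height T))"
    unfolding alg_height_def using oriented_tree_hom_dipath[OF assms(1)] by (rule LeastI_ex)
  then have "is_hom T (dipath (alg_height T)) (height_map T)"
    unfolding hom_to_def height_map_def by (rule someI_ex)
  then have "(height_map T x, height_map T y) \<in> arcs (dipath (alg_height T))"
    using assms(2) unfolding is_hom_def by auto
  then show ?thesis by (auto simp: dipath_def arcs_def)
qed


section \<open>The left adjoint of Psi\<close>

definition Lambda :: "nat digraph \<Rightarrow> nat digraph" where
  "Lambda G = ((\<lambda>v. 2 * v) ` verts G \<union> (\<lambda>v. 2 * v + 1) ` verts G,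
     {(2 * v, 2 * v + 1) | v. v \<in> verts G} \<union> {(2 * u + 1, 2 * v) | u v. (u, v) \<in> arcs G})"

lemma Lambda_verts: "n \<in> verts (Lambda G) \<longleftrightarrow> n div 2 \<in> verts G"
proof -
  have "n = 2 * (n div 2) \<or> n = 2 * (n div 2) + 1" by presburger
  then show ?thesis unfolding Lambda_def verts_def by auto
qed

lemma Lambda_arcs: "(m, n) \<in> arcs (Lambda G) \<longleftrightarrow>
   (even m \<and> n = Suc m \<and> m div 2 \<in> verts G) \<or> (odd m \<and> even n \<and> (m div 2, n div 2) \<in> arcs G)"
proof
  assume "(m, n) \<in> arcs (Lambda G)"
  then show "(even m \<and> n = Suc m \<and> m div 2 \<in> verts G) \<or> (odd m \<and> even n \<and> (m div 2, n div 2) \<in> arcs G)"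
    by (auto simp: Lambda_def arcs_def)
next
  assume "(even m \<and> n = Suc m \<and> m div 2 \<in> verts G) \<or> (odd m \<and> even n \<and> (m div 2, n div 2) \<in> arcs G)"
  then consider "even m" "n = Suc m" "m div 2 \<in> verts G"
    | "odd m" "even n" "(m div 2, n div 2) \<in> arcs G"
    by blast
  then show "(m, n) \<in> arcs (Lambda G)"
  proof cases
    case 1
    then have "(m, n) = (2 * (m div 2), 2 * (m div 2) + 1)" by auto
    then show ?thesis using 1(3) unfolding Lambda_def arcs_def by auto
  next
    case 2
    then have "(m, n) = (2 * (m div 2) + 1, 2 * (n div 2))" by auto
    then show ?thesis using 2(3) unfolding Lambda_def arcs_def by auto
  qed
qed

lemma wf_Lambda: assumes "wf_digraph G" shows "wf_digraph (Lambda G)"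
proof -
  have "finite (verts (Lambda G))" using assms unfolding wf_digraph_def Lambda_def verts_def by auto
  moreover have "arcs (Lambda G) \<subseteq> verts (Lambda G) \<times> verts (Lambda G)"
    using assms unfolding wf_digraph_def by (auto simp: Lambda_arcs Lambda_verts)
  ultimately show ?thesis unfolding wf_digraph_def by blast
qed

lemma Psi_verts: "verts (Psi H) = arcs H"
  by (simp add: Psi_def verts_def arcs_def)

lemma Psi_arcs: "((a, b), (c, d)) \<in> arcs (Psi H) \<longleftrightarrow> (a, b) \<in> arcs H \<and> (c, d) \<in> arcs H \<and> (b, c) \<in> arcs H"
  by (simp add: Psi_def arcs_def)

lemma hom_Psi_imp_Lambda:
  assumes H: "wf_digraph H" and f: "is_hom G (Psi H) f"
  shows "hom_to (Lambda G) H"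
proof -
  define k where "k n = (if even n then fst (f (n div 2)) else snd (f (n div 2)))" for n
  have f_verts: "v \<in> verts G \<Longrightarrow> f v \<in> arcs H" for v using f unfolding is_hom_def Psi_verts by auto
  have "is_hom (Lambda G) H k"
    unfolding is_hom_def
  proof (intro conjI allI impI)
    show "k ` verts (Lambda G) \<subseteq> verts H"
      using f_verts H unfolding wf_digraph_def k_def by (fastforce simp: Lambda_verts)
  next
    fix m n assume "(m, n) \<in> arcs (Lambda G)"
    then consider "even m" "n = Suc m" "m div 2 \<in> verts G"
      | "odd m" "even n" "(m div 2, n div 2) \<in> arcs G"
      unfolding Lambda_arcs by blast
    then show "(k m, k n) \<in> arcs H"
    proof cases
      case 1
      then show ?thesis using f_verts[of "m div 2"] unfolding k_def by auto
    next
      case 2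
      then have "(f (m div 2), f (n div 2)) \<in> arcs (Psi H)" using f unfolding is_hom_def by auto
      then show ?thesis using 2 unfolding k_def
        by (cases "f (m div 2)"; cases "f (n div 2)") (auto simp: Psi_arcs)
    qed
  qed
  then show ?thesis unfolding hom_to_def by blast
qed

lemma hom_Lambda_imp_Psi:
  assumes G: "wf_digraph G" and k: "is_hom (Lambda G) H k"
  shows "hom_to G (Psi H)"
proof -
  define f where "f v = (k (2 * v), k (2 * v + 1))" for v
  have f_verts: "f v \<in> arcs H" if "v \<in> verts G" for v
  proof -
    have "(2 * v, 2 * v + 1) \<in> arcs (Lambda G)" using that by (simp add: Lambda_arcs)
    then show ?thesis using k unfolding is_hom_def f_def by auto
  qed
  have "is_hom G (Psi H) f"
    unfolding is_hom_def
  proof (intro conjI allI impI)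
    show "f ` verts G \<subseteq> verts (Psi H)" using f_verts unfolding Psi_verts by auto
  next
    fix u v assume uv: "(u, v) \<in> arcs G"
    then have "(2 * u + 1, 2 * v) \<in> arcs (Lambda G)" by (simp add: Lambda_arcs)
    then have "(k (2 * u + 1), k (2 * v)) \<in> arcs H" using k unfolding is_hom_def by auto
    moreover have "u \<in> verts G" "v \<in> verts G" using G uv unfolding wf_digraph_def by auto
    ultimately show "(f u, f v) \<in> arcs (Psi H)" using f_verts unfolding f_def by (simp add: Psi_arcs)
  qed
  then show ?thesis unfolding hom_to_def by blast
qed

theorem Psi_adjunction:
  assumes "wf_digraph H" "wf_digraph G"
  shows "hom_to G (Psi H) \<longleftrightarrow> hom_to (Lambda G) H"
  using hom_Psi_imp_Lambda[OF assms(1)] hom_Lambda_imp_Psi[OF assms(2)]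
  unfolding hom_to_def by blast


section \<open>Trees mapping to Lambda G\<close>

definition parity_arcs :: "'a digraph \<Rightarrow> nat \<Rightarrow> ('a \<times> 'a) set" where
  "parity_arcs T p = {(x, y). (x, y) \<in> arcs T \<and> even (height_map T x + p)}"

lemma sim_b_parity: "sim_b T = path_equiv T (parity_arcs T 0)"
  by (simp add: sim_b_def blue_arcs_def parity_arcs_def)

lemma sim_r_parity: "sim_r T = path_equiv T (parity_arcs T 1)"
  by (simp add: sim_r_def red_arcs_def parity_arcs_def)

lemma quot_noloops_verts: "verts (quot_noloops T R) = verts T // R"
  by (simp add: quot_noloops_def verts_def)

lemma quot_noloops_arcs: "(X, Y) \<in> arcs (quot_noloops T R) \<longleftrightarrow>
   X \<in> verts T // R \<and> Y \<in> verts T // R \<and> X \<noteq> Y \<and> (\<exists>x\<in>X. \<exists>y\<in>Y. (x, y) \<in> arcs T)"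
  by (simp add: quot_noloops_def arcs_def)

lemma hom_from_quotient:
  assumes F_verts: "\<And>x. x \<in> verts T \<Longrightarrow> F x \<in> verts G"
    and F_const: "\<And>x y. (x, y) \<in> S \<Longrightarrow> F x = F y"
    and F_arcs: "\<And>x y. (x, y) \<in> arcs T \<Longrightarrow> (x, y) \<notin> S \<Longrightarrow> (F x, F y) \<in> arcs G"
  shows "hom_to (quot_noloops T (path_equiv T S)) G"
proof -
  define R where "R = path_equiv T S"
  have eq: "equiv (verts T) R" unfolding R_def by (rule equiv_path_equiv)
  define g where "g X = F (SOME x. x \<in> X)" for X
  have g_class: "g X = F x" if X: "X \<in> verts T // R" "x \<in> X" for X x
  proof -
    have "(SOME x. x \<in> X) \<in> X" using X(2) by (rule someI)
    then have "(x, SOME x. x \<in> X) \<in> R" using quotient_eq_iff[OF eq X(1) X(1) X(2)] by blast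
    then have "(x, SOME x. x \<in> X) \<in> (undir S)\<^sup>*" unfolding R_def path_equiv_def by simp
    then have "F x = F (SOME x. x \<in> X)" by (rule undir_walk_invariant[where F = F]) (rule F_const)
    then show ?thesis unfolding g_def by simp
  qed
  have "is_hom (quot_noloops T R) G g"
    unfolding is_hom_def
  proof (intro conjI allI impI)
    show "g ` verts (quot_noloops T R) \<subseteq> verts G"
    proof
      fix Y assume "Y \<in> g ` verts (quot_noloops T R)"
      then obtain x where "x \<in> verts T" "Y = g (R `` {x})"
        unfolding quot_noloops_verts by (auto elim: quotientE)
      then show "Y \<in> verts G"
        using g_class equiv_class_self[OF eq] F_verts by (metis quotientI)
    qed
  next
    fix X Y assume "(X, Y) \<in> arcs (quot_noloops T R)"
    then obtain x y where XY: "X \<in> verts T // R" "Y \<in> verts T // R" "X \<noteq> Y"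
      and xy: "x \<in> X" "y \<in> Y" "(x, y) \<in> arcs T"
      unfolding quot_noloops_arcs by blast
    have "(x, y) \<notin> S"
    proof
      assume "(x, y) \<in> S"
      then have "(x, y) \<in> R"
        using xy XY in_quotient_imp_subset[OF eq] unfolding R_def path_equiv_def undir_def by blast
      then show False using quotient_eq_iff[OF eq XY(1,2) xy(1,2)] XY(3) by blast
    qed
    then show "(g X, g Y) \<in> arcs G" using F_arcs xy g_class XY by auto
  qed
  then show ?thesis unfolding hom_to_def R_def by blast
qed

text \<open>Under a map phi : T -> Lambda G the parity of phi x + t x is preserved along arcs, hence
  constant on the connected tree T.\<close>
lemma Lambda_hom_parity:
  assumes T: "oriented_tree T" and phi: "is_hom T (Lambda G) \<phi>"
    and x: "x \<in> verts T" and y: "y \<in> verts T"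
  shows "(\<phi> x + height_map T x) mod 2 = (\<phi> y + height_map T y) mod 2"
proof -
  have "(x, y) \<in> (undir (arcs T))\<^sup>*" using T x y unfolding oriented_tree_def by blast
  moreover have "(\<phi> a + height_map T a) mod 2 = (\<phi> b + height_map T b) mod 2"
    if ab: "(a, b) \<in> arcs T" for a b
  proof -
    have "(\<phi> a, \<phi> b) \<in> arcs (Lambda G)" using phi ab unfolding is_hom_def by auto
    then have "\<phi> b = Suc (\<phi> a) \<or> (odd (\<phi> a) \<and> even (\<phi> b))" unfolding Lambda_arcs by blast
    moreover have "height_map T b = Suc (height_map T a)" using height_map_arc[OF T ab] .
    ultimately show ?thesis by (elim disjE conjE) presburger+
  qed
  ultimately show ?thesis
    by (rule undir_walk_invariant[where F = "\<lambda>u. (\<phi> u + height_map T u) mod 2"])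
qed

text \<open>A map T -> Lambda G factors, after halving, through T/~b or T/~r: the arcs of the colour
  of matching parity are sent to vertex arcs, all others to arcs of G.\<close>
lemma hom_Lambda_imp_quotient:
  assumes T: "oriented_tree T" and phi: "is_hom T (Lambda G) \<phi>"
  shows "\<exists>p<2. hom_to (quot_noloops T (path_equiv T (parity_arcs T p))) G"
proof -
  define t where "t = height_map T"
  obtain x0 where x0: "x0 \<in> verts T" using T unfolding oriented_tree_def by auto
  define p where "p = (\<phi> x0 + t x0) mod 2"
  have parity: "even (\<phi> x) \<longleftrightarrow> even (t x + p)" if "x \<in> verts T" for x
    using Lambda_hom_parity[OF T phi that x0] unfolding p_def t_def by presburger
  have arc_Lambda: "(\<phi> x, \<phi> y) \<in> arcs (Lambda G)" if "(x, y) \<in> arcs T" for x y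
    using phi that unfolding is_hom_def by auto
  have x_verts: "x \<in> verts T" if "(x, y) \<in> arcs T" for x y
    using T that unfolding oriented_tree_def wf_digraph_def by auto
  have "hom_to (quot_noloops T (path_equiv T (parity_arcs T p))) G"
  proof (rule hom_from_quotient[where F = "\<lambda>x. \<phi> x div 2"])
    show "\<phi> x div 2 \<in> verts G" if "x \<in> verts T" for x
      using phi that unfolding is_hom_def by (auto simp: Lambda_verts)
    show "\<phi> x div 2 = \<phi> y div 2" if "(x, y) \<in> parity_arcs T p" for x y
    proof -
      have xy: "(x, y) \<in> arcs T" "even (t x + p)" using that unfolding parity_arcs_def t_def by auto
      then have "even (\<phi> x)" using parity x_verts by blast
      moreover have "\<phi> y = Suc (\<phi> x)" using calculation arc_Lambda[OF xy(1)] unfolding Lambda_arcs by blast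
      ultimately show ?thesis by simp
    qed
    show "(\<phi> x div 2, \<phi> y div 2) \<in> arcs G" if xy: "(x, y) \<in> arcs T" "(x, y) \<notin> parity_arcs T p" for x y
    proof -
      have "odd (\<phi> x)" using xy parity[OF x_verts[OF xy(1)]] unfolding parity_arcs_def t_def by auto
      then show ?thesis using arc_Lambda[OF xy(1)] unfolding Lambda_arcs by blast
    qed
  qed
  moreover have "p < 2" unfolding p_def by simp
  ultimately show ?thesis by blast
qed

lemma parity_class_level:
  assumes T: "oriented_tree T" and xy: "(x, y) \<in> path_equiv T (parity_arcs T p)"
  shows "(height_map T x + p) div 2 = (height_map T y + p) div 2"
proof -
  have "(x, y) \<in> (undir (parity_arcs T p))\<^sup>*" using xy unfolding path_equiv_def by simp
  then show ?thesis
  proof (rule undir_walk_invariant[where F = "\<lambda>u. (height_map T u + p) div 2"])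
    fix a b assume "(a, b) \<in> parity_arcs T p"
    then have ab: "(a, b) \<in> arcs T" "even (height_map T a + p)" unfolding parity_arcs_def by auto
    then have "height_map T b + p = Suc (height_map T a + p)" using height_map_arc[OF T] by simp
    then show "(height_map T a + p) div 2 = (height_map T b + p) div 2" using ab(2) by simp
  qed
qed

text \<open>Conversely, a map g : T/~ -> G lifts to T -> Lambda G by sending x to the tail or head
  of the vertex arc of g [x], according to the parity of its level.\<close>
lemma quotient_hom_imp_Lambda:
  assumes T: "oriented_tree T"
    and g: "is_hom (quot_noloops T (path_equiv T (parity_arcs T p))) G g"
  shows "hom_to T (Lambda G)"
proof -
  define R where "R = path_equiv T (parity_arcs T p)"
  define t where "t = height_map T"
  have eq: "equiv (verts T) R" unfolding R_def by (rule equiv_path_equiv)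
  have arc_verts: "x \<in> verts T" "y \<in> verts T" if "(x, y) \<in> arcs T" for x y
    using T that unfolding oriented_tree_def wf_digraph_def by auto
  define \<phi> where "\<phi> x = 2 * g (R `` {x}) + (if even (t x + p) then 0 else 1)" for x
  have g_verts: "g (R `` {x}) \<in> verts G" if "x \<in> verts T" for x
    using g quotientI[OF that, of R] unfolding is_hom_def quot_noloops_verts R_def by auto
  have "is_hom T (Lambda G) \<phi>"
    unfolding is_hom_def
  proof (intro conjI allI impI)
    show "\<phi> ` verts T \<subseteq> verts (Lambda G)"
      using g_verts unfolding \<phi>_def by (auto simp: Lambda_verts)
  next
    fix x y assume xy: "(x, y) \<in> arcs T"
    have ty: "t y = Suc (t x)" using height_map_arc[OF T xy] unfolding t_def .
    show "(\<phi> x, \<phi> y) \<in> arcs (Lambda G)"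
    proof (cases "even (t x + p)")
      case True
      then have "(x, y) \<in> parity_arcs T p" using xy unfolding parity_arcs_def t_def by auto
      then have "R `` {x} = R `` {y}"
        unfolding R_def by (rule path_equiv_arc_class[OF _ arc_verts[OF xy]])
      then show ?thesis using True ty g_verts[OF arc_verts(1)[OF xy]]
        unfolding \<phi>_def by (simp add: Lambda_arcs)
    next
      case False
      have "R `` {x} \<noteq> R `` {y}"
      proof
        assume "R `` {x} = R `` {y}"
        then have "(x, y) \<in> R" using eq_equiv_class_iff[OF eq arc_verts[OF xy]] by blast
        then show False
          using parity_class_level[OF T] False ty unfolding R_def t_def by fastforce
      qed
      then have "(R `` {x}, R `` {y}) \<in> arcs (quot_noloops T R)"
        unfolding quot_noloops_arcs
        using arc_verts[OF xy] xy equiv_class_self[OF eq] by (blast intro: quotientI)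
      then have "(g (R `` {x}), g (R `` {y})) \<in> arcs G" using g unfolding is_hom_def R_def by auto
      then show ?thesis using False ty unfolding \<phi>_def by (simp add: Lambda_arcs)
    qed
  qed
  then show ?thesis unfolding hom_to_def by blast
qed

theorem oriented_tree_hom_Lambda_iff:
  assumes "oriented_tree T"
  shows "hom_to T (Lambda G) \<longleftrightarrow>
    hom_to (quot_noloops T (sim_b T)) G \<or> hom_to (quot_noloops T (sim_r T)) G"
proof -
  let ?Q = "\<lambda>p. quot_noloops T (path_equiv T (parity_arcs T p))"
  have "hom_to T (Lambda G) \<longleftrightarrow> (\<exists>p<2. hom_to (?Q p) G)"
  proof
    assume "hom_to T (Lambda G)"
    then obtain \<phi> where "is_hom T (Lambda G) \<phi>" unfolding hom_to_def ..
    then show "\<exists>p<2. hom_to (?Q p) G" by (rule hom_Lambda_imp_quotient[OF assms])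
  next
    assume "\<exists>p<2. hom_to (?Q p) G"
    then obtain p g where "is_hom (?Q p) G g" unfolding hom_to_def by blast
    then show "hom_to T (Lambda G)" by (rule quotient_hom_imp_Lambda[OF assms])
  qed
  also have "\<dots> \<longleftrightarrow> hom_to (?Q 0) G \<or> hom_to (?Q 1) G"
    by (auto simp: less_2_cases_iff)
  finally show ?thesis unfolding sim_b_parity sim_r_parity .
qed


theorem mainTheorem12:
  fixes H :: "'h digraph" and \<T> :: "'a digraph set"
  assumes "wf_digraph H"
    and "\<forall>T\<in>\<T>. oriented_tree T"
    and "complete_obs \<T> H"
  shows "complete_obs (Psi_sproink \<T>) (Psi H)"
  unfolding complete_obs_def
proof (intro allI impI)
  fix G :: "nat digraph" assume G: "wf_digraph G"
  have "hom_to G (Psi H) \<longleftrightarrow> hom_to (Lambda G) H" by (rule Psi_adjunction[OF assms(1) G])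
  also have "\<dots> \<longleftrightarrow> \<not> (\<exists>T\<in>\<T>. hom_to T (Lambda G))"
    using assms(3) wf_Lambda[OF G] unfolding complete_obs_def by blast
  also have "(\<exists>T\<in>\<T>. hom_to T (Lambda G)) \<longleftrightarrow> (\<exists>Q\<in>Psi_sproink \<T>. hom_to Q G)"
    using oriented_tree_hom_Lambda_iff[of _ G] assms(2)
    unfolding Psi_sproink_def image_Un[symmetric] Bex_def image_iff Un_iff by blast
  finally show "hom_to G (Psi H) \<longleftrightarrow> \<not> (\<exists>Q\<in>Psi_sproink \<T>. hom_to Q G)" .
qed

end
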